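(* With notation as in the context, for each $1\le m\le d$ the series $I_m=\sum_{k>dn,\ k\equiv m \pmod d}P_n(k)$ converges and \[ I_m=\sum_{\substack{2\le j\le a\\ j\equiv a\ (\mathrm{mod}\ 2)}}A_j\,\zeta_m(j)-B_m, \] where $A_j=\sum_{l=-n}^nA_{l,j}(n)$ and \[ B_m=\sum_{j=1}^a\sum_{l=-n}^{n}A_{l,j}(n)\Bigl(\frac1{m^j}+\frac1{(d+m)^j}+\cdots+\frac1{(d(n-l-1)+m)^j}\Bigr) \] (the inner sum being over the terms $1/(dk+m)^j$ for $0\le k\le n-l-1$, empty if $l=n$). Consequently, for any real $a_1,\dots,a_d$, $I=\sum_{m=1}^d a_mI_m$ equals $\sum_{2\le j\le a,\,j\equiv a(2)}A_jL(j)-\sum_{m=1}^dB_ma_m$ where $L(s)=\sum_{k\ge1}a_kk^{-s}$ with $a_{k+d}=a_k$.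
   Context: Fix positive integers $d,a,b$ with $a\ge 2b$ and a positive integer $n$. Let $Q_n(t)=\prod_{dn<l\le (d+2b)n}(t-l)(t+l)$, $R_n(t)=\bigl(\prod_{-n\le l\le n}(t-dl)\bigr)^a$, and $P_n(t)=\frac{Q_n(t)}{R_n(t)}((2n)!)^{a-2b}d^{2na}$, with unique partial fraction decomposition $P_n(t)=\sum_{j=1}^{a}\sum_{l=-n}^n A_{l,j}(n)(t-dl)^{-j}$, $A_{l,j}(n)\in\mathbb Q$. For $1\le m\le d$ and $\mathrm{Re}(s)>1$, $\zeta_m(s)=\sum_{k\ge1,\ k\equiv m\ (\mathrm{mod}\ d)}k^{-s}$. *)

theory Defs
  imports "HOL-Analysis.Analysis"
begin

definition Qn :: "nat \<Rightarrow> nat \<Rightarrow> nat \<Rightarrow> real \<Rightarrow> real" where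
  "Qn d b n t = (\<Prod>l\<in>{d*n<..(d+2*b)*n}. (t - real l) * (t + real l))"

definition Rn :: "nat \<Rightarrow> nat \<Rightarrow> nat \<Rightarrow> real \<Rightarrow> real" where
  "Rn d a n t = (\<Prod>l\<in>{-int n..int n}. (t - real d * of_int l)) ^ a"

definition Pn :: "nat \<Rightarrow> nat \<Rightarrow> nat \<Rightarrow> nat \<Rightarrow> real \<Rightarrow> real" where
  "Pn d a b n t = Qn d b n t / Rn d a n t * (fact (2*n)) ^ (a - 2*b) * real d ^ (2*n*a)"

definition zeta_m :: "nat \<Rightarrow> nat \<Rightarrow> nat \<Rightarrow> real" where
  "zeta_m d m s = (\<Sum>\<^sub>\<infinity>k\<in>{k::nat. 1 \<le> k \<and> k mod d = m mod d}. 1 / real k ^ s)"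

definition Acoef :: "(int \<Rightarrow> nat \<Rightarrow> real) \<Rightarrow> nat \<Rightarrow> nat \<Rightarrow> real" where
  "Acoef A n j = (\<Sum>l\<in>{-int n..int n}. A l j)"

definition Bcoef :: "(int \<Rightarrow> nat \<Rightarrow> real) \<Rightarrow> nat \<Rightarrow> nat \<Rightarrow> nat \<Rightarrow> nat \<Rightarrow> real" where
  "Bcoef A d a n m = (\<Sum>j\<in>{1..a}. \<Sum>l\<in>{-int n..int n}.
       A l j * (\<Sum>k\<in>{0..int n - l - 1}. 1 / (real d * of_int k + real m) ^ j))"

definition Lser :: "(nat \<Rightarrow> real) \<Rightarrow> nat \<Rightarrow> real" where
  "Lser c s = (\<Sum>\<^sub>\<infinity>k\<in>{1::nat..}. c k / real k ^ s)"

end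

theory Submission
  imports Defs "HOL-Real_Asymp.Real_Asymp"
begin

(* Write x_l = d l for the poles of P_n and L = {-n..n}.
   (1) Partial fraction expansions with distinct poles are unique.  Since Q_n is even and R_n
       has parity (-1)^a, P_n(-t) = (-1)^a P_n(t); comparing the expansions of both sides shows
       that A_j = sum_l A_{l,j} vanishes unless j = a (mod 2).
   (2) Q_n has degree 4bn and R_n degree (2n+1)a >= 4bn + 2, so |P_n(t)| <= C/t^2 for large t.
       Hence t P_n(t) -> 0, whereas t P_n(t) -> A_1 by the expansion; thus A_1 = 0.
   (3) Along k = d(n+i)+m every pole term becomes A_{l,j} / (d(i + n - l) + m)^j, a shifted tail
       of the series zeta_m(j).  For j >= 2 these series converge; for j = 1 the terms combine
       into telescoping differences thanks to A_1 = 0.  Summing over i gives the value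
       sum_{j>=2} A_j zeta_m(j) - B_m as an ordinary series; the decay bound upgrades this to
       an unconditional sum over the residue class, and (1) discards the j of wrong parity.
   (4) For a d-periodic c, L(s) splits over the residue classes as sum_m c_m zeta_m(s), which
       turns the per-class identities into the stated identity for I = sum_m c_m I_m. *)

(* If a finite sum of pole terms c_{l,j}/(t - x_l)^j (j <= N) vanishes identically, the top
   coefficient at any pole is zero: multiply by (t - x_{l0})^N and let t tend to x_{l0}. *)
lemma partial_fraction_top_coeff_zero:
  fixes x :: "'i \<Rightarrow> real" and c :: "'i \<Rightarrow> nat \<Rightarrow> real"
  assumes fin: "finite L" and inj: "inj_on x L" and l0: "l0 \<in> L" and N: "N > 0"
    and zero: "\<And>t. (\<forall>l\<in>L. t \<noteq> x l) \<Longrightarrow> (\<Sum>j\<in>{1..N}. \<Sum>l\<in>L. c l j / (t - x l)^j) = 0"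
  shows "c l0 N = 0"
proof -
  define h where "h t = (\<Sum>j\<in>{1..N}. \<Sum>l\<in>L-{l0}. c l j * (t - x l0)^N / (t - x l)^j)
      + (\<Sum>j\<in>{1..N}. c l0 j * (t - x l0)^(N - j))" for t
  have "isCont h (x l0)"
    using inj l0 unfolding h_def by (intro continuous_intros) (auto simp: inj_on_def)
  hence lim_h: "(h \<longlongrightarrow> h (x l0)) (at (x l0))" by (simp add: isCont_def)
  have h_at_pole: "h (x l0) = c l0 N"
  proof -
    have "(\<Sum>j\<in>{1..N}. c l0 j * (x l0 - x l0)^(N - j)) = (\<Sum>j\<in>{1..N}. if j = N then c l0 j else 0)"
      by (intro sum.cong) auto
    also have "\<dots> = c l0 N" using N by simp
    finally show ?thesis unfolding h_def using N by (simp add: zero_power)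
  qed
  have h_zero: "h t = 0" if "\<forall>l\<in>L. t \<noteq> x l" for t
  proof -
    have ne: "t \<noteq> x l0" using that l0 by blast
    have "0 = (t - x l0)^N * (\<Sum>j\<in>{1..N}. \<Sum>l\<in>L. c l j / (t - x l)^j)"
      using zero[OF that] by simp
    also have "\<dots> = (\<Sum>j\<in>{1..N}. (\<Sum>l\<in>L-{l0}. c l j * (t - x l0)^N / (t - x l)^j)
                        + c l0 j * (t - x l0)^N / (t - x l0)^j)"
      by (simp add: sum_distrib_left sum.remove[OF fin l0] algebra_simps)
    also have "\<dots> = h t" unfolding h_def sum.distrib
      using ne by (auto intro!: sum.cong simp: power_diff)
    finally show ?thesis by simp
  qed
  have "eventually (\<lambda>t. \<forall>l\<in>L. t \<noteq> x l) (at (x l0))"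
    using fin inj l0
    by (auto simp: eventually_ball_finite_distrib eventually_neq_at_within inj_on_def
             intro!: eventually_ball_finite)
  hence "eventually (\<lambda>t. h t = 0) (at (x l0))" by (rule eventually_mono) (rule h_zero)
  hence "(h \<longlongrightarrow> 0) (at (x l0))" by (rule tendsto_eventually)
  from tendsto_unique[OF _ lim_h this] h_at_pole show ?thesis by simp
qed

lemma partial_fraction_unique:
  fixes x :: "'i \<Rightarrow> real" and c :: "'i \<Rightarrow> nat \<Rightarrow> real"
  assumes fin: "finite L" and inj: "inj_on x L"
    and zero: "\<And>t. (\<forall>l\<in>L. t \<noteq> x l) \<Longrightarrow> (\<Sum>j\<in>{1..N}. \<Sum>l\<in>L. c l j / (t - x l)^j) = 0"
    and l: "l \<in> L" and j: "j \<in> {1..N}"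
  shows "c l j = 0"
  using zero j
proof (induction N arbitrary: j)
  case 0
  then show ?case by simp
next
  case (Suc N)
  have top: "c l' (Suc N) = 0" if "l' \<in> L" for l'
    using partial_fraction_top_coeff_zero[OF fin inj that, of "Suc N" c] Suc.prems(1) by blast
  show ?case
  proof (cases "j = Suc N")
    case True
    then show ?thesis using top[OF l] by simp
  next
    case False
    have "(\<Sum>j\<in>{1..N}. \<Sum>l\<in>L. c l j / (t - x l)^j) = 0" if "\<forall>l\<in>L. t \<noteq> x l" for t
      using Suc.prems(1)[OF that] top by simp
    then show ?thesis using Suc.IH False Suc.prems(2) by auto
  qed
qed

lemma sum_reflect_int: "(\<Sum>l\<in>{-int n..int n}. f (-l)) = (\<Sum>l\<in>{-int n..int n}. f l)"
  by (rule sum.reindex_bij_witness[of _ uminus uminus]) auto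

lemma prod_reflect_int: "(\<Prod>l\<in>{-int n..int n}. f (-l)) = (\<Prod>l\<in>{-int n..int n}. f l)"
  by (rule prod.reindex_bij_witness[of _ uminus uminus]) auto

lemma Qn_even: "Qn d b n (-t) = Qn d b n t"
  unfolding Qn_def by (intro prod.cong) (auto simp: algebra_simps)

lemma Rn_parity: "Rn d a n (-t) = (-1)^a * Rn d a n t"
proof -
  have "(\<Prod>l\<in>{-int n..int n}. (-t - real d * of_int l))
      = (\<Prod>l\<in>{-int n..int n}. (-1) * (t - real d * of_int (-l)))"
    by (intro prod.cong) (auto simp: algebra_simps)
  also have "\<dots> = (\<Prod>l\<in>{-int n..int n}. (-1::real)) * (\<Prod>l\<in>{-int n..int n}. (t - real d * of_int (-l)))"
    by (rule prod.distrib)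
  also have "(\<Prod>l\<in>{-int n..int n}. (-1::real)) = -1"
    by (simp add: nat_add_distrib nat_mult_distrib)
  also have "(\<Prod>l\<in>{-int n..int n}. (t - real d * of_int (-l))) = (\<Prod>l\<in>{-int n..int n}. (t - real d * of_int l))"
    by (rule prod_reflect_int)
  finally show ?thesis unfolding Rn_def by (metis mult_minus1 power_minus)
qed

lemma Pn_parity: "Pn d a b n (-t) = (-1)^a * Pn d a b n t"
  unfolding Pn_def Qn_even Rn_parity by (cases "even a") auto

lemma partial_fraction_reflect:
  fixes A :: "int \<Rightarrow> nat \<Rightarrow> real"
  shows "(\<Sum>j\<in>{1..N}. \<Sum>l\<in>{-int n..int n}. A l j / (-t - real d * of_int l)^j)
       = (\<Sum>j\<in>{1..N}. \<Sum>l\<in>{-int n..int n}. (-1)^j * A (-l) j / (t - real d * of_int l)^j)"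
proof (rule sum.cong[OF refl])
  fix j
  have "(\<Sum>l\<in>{-int n..int n}. A l j / (-t - real d * of_int l)^j)
      = (\<Sum>l\<in>{-int n..int n}. A (-l) j / (-t - real d * of_int (-l))^j)"
    by (rule sum_reflect_int[symmetric])
  also have "\<dots> = (\<Sum>l\<in>{-int n..int n}. (-1)^j * A (-l) j / (t - real d * of_int l)^j)"
  proof (rule sum.cong[OF refl])
    fix l
    have "(-t - real d * of_int (-l))^j = (-1)^j * (t - real d * of_int l)^j"
      by (simp add: power_mult_distrib[symmetric])
    thus "A (-l) j / (-t - real d * of_int (-l))^j = (-1)^j * A (-l) j / (t - real d * of_int l)^j"
      by (cases "even j") simp_all
  qed
  finally show "(\<Sum>l\<in>{-int n..int n}. A l j / (-t - real d * of_int l)^j)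
      = (\<Sum>l\<in>{-int n..int n}. (-1)^j * A (-l) j / (t - real d * of_int l)^j)" .
qed

(* If P(-t) = (-1)^N P(t) and P has an expansion with poles d l, l in {-n..n}, then the
   coefficient sums A_j vanish for every j of parity different from N: by uniqueness the
   reflected expansion coincides with that of (-1)^N P(t), i.e. (-1)^j A_{-l,j} = (-1)^N A_{l,j}. *)
lemma coeff_sum_zero_by_parity:
  fixes P :: "real \<Rightarrow> real" and A :: "int \<Rightarrow> nat \<Rightarrow> real"
  assumes d: "d > 0"
    and pfd: "\<And>t. (\<forall>l\<in>{-int n..int n}. t \<noteq> real d * of_int l) \<Longrightarrow>
        P t = (\<Sum>j\<in>{1..N}. \<Sum>l\<in>{-int n..int n}. A l j / (t - real d * of_int l) ^ j)"
    and sym: "\<And>t. P (-t) = (-1)^N * P t"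
    and j: "j \<in> {1..N}" and parity: "j mod 2 \<noteq> N mod 2"
  shows "Acoef A n j = 0"
proof -
  define L where "L = {-int n..int n}"
  define c where "c l j = (-1)^j * A (-l) j - (-1)^N * A l j" for l j
  have c_zero: "c l j = 0" if "l \<in> L" for l
  proof (rule partial_fraction_unique[where x = "\<lambda>l. real d * of_int l" and L = L and N = N])
    show "inj_on (\<lambda>l. real d * of_int l) L" using d by (auto simp: inj_on_def)
    fix t assume nonpole: "\<forall>l\<in>L. t \<noteq> real d * of_int l"
    have "\<forall>l\<in>{-int n..int n}. -t \<noteq> real d * of_int l"
    proof
      fix l assume "l \<in> {-int n..int n}"
      hence "-l \<in> L" by (simp add: L_def)
      hence "t \<noteq> real d * of_int (-l)" using nonpole by blast
      thus "-t \<noteq> real d * of_int l" by auto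
    qed
    hence reflected: "P (-t) = (\<Sum>j\<in>{1..N}. \<Sum>l\<in>L. (-1)^j * A (-l) j / (t - real d * of_int l)^j)"
      unfolding L_def partial_fraction_reflect[symmetric] by (rule pfd)
    have "(\<Sum>j\<in>{1..N}. \<Sum>l\<in>L. c l j / (t - real d * of_int l)^j) = P (-t) - (-1)^N * P t"
      unfolding c_def reflected pfd[OF nonpole[unfolded L_def]] L_def
      by (simp add: sum_subtractf diff_divide_distrib sum_distrib_left)
    thus "(\<Sum>j\<in>{1..N}. \<Sum>l\<in>L. c l j / (t - real d * of_int l)^j) = 0" by (simp add: sym)
  qed (use that j in \<open>auto simp: L_def\<close>)
  have "(-1)^j * Acoef A n j = (\<Sum>l\<in>L. (-1)^j * A (-l) j)"
    using sum_reflect_int[of "\<lambda>l. (-1)^j * A l j"] by (simp add: Acoef_def L_def sum_distrib_left)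
  also have "\<dots> = (\<Sum>l\<in>L. (-1)^N * A l j)"
    using c_zero by (intro sum.cong refl) (auto simp: c_def)
  also have "\<dots> = (-1)^N * Acoef A n j" by (simp add: Acoef_def L_def sum_distrib_left)
  finally have "(-1)^j * Acoef A n j = (-1)^N * Acoef A n j" .
  moreover have "(-1::real)^j = - ((-1)^N)"
    using parity by (cases "even j"; cases "even N") (auto simp: odd_iff_mod_2_eq_one)
  ultimately show ?thesis by simp
qed

(* For t beyond all zeros, each factor (t-l)(t+l) lies in [0, t^2]. *)
lemma Qn_bounds:
  assumes t: "real ((d + 2*b) * n) \<le> t"
  shows "0 \<le> Qn d b n t" and "Qn d b n t \<le> t ^ (4*b*n)"
proof -
  have factor_bounds: "0 \<le> (t - real l) * (t + real l) \<and> (t - real l) * (t + real l) \<le> t^2"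
    if "l \<in> {d*n<..(d+2*b)*n}" for l
  proof -
    have "real l \<le> real ((d + 2*b) * n)" using that by (simp only: of_nat_le_iff greaterThanAtMost_iff)
    hence l: "0 \<le> real l" "real l \<le> t" using t by auto
    hence "real l * real l \<le> t * t" by (intro mult_mono) auto
    thus ?thesis using l by (simp add: algebra_simps power2_eq_square)
  qed
  show "0 \<le> Qn d b n t" unfolding Qn_def using factor_bounds by (intro prod_nonneg) blast
  have "Qn d b n t \<le> (\<Prod>l\<in>{d*n<..(d+2*b)*n}. t^2)"
    unfolding Qn_def using factor_bounds by (intro prod_mono) blast
  also have "\<dots> = t ^ (4*b*n)" by (simp add: algebra_simps flip: power_mult)
  finally show "Qn d b n t \<le> t ^ (4*b*n)" .
qed

(* For t >= 2dn every factor t - dl is at least t/2. *)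
lemma Rn_lower_bound:
  assumes t: "2 * real (d * n) \<le> t"
  shows "(t/2) ^ ((2*n+1)*a) \<le> Rn d a n t"
proof -
  have t0: "0 \<le> t" using t of_nat_0_le_iff[of "d * n"] by linarith
  have "(t/2) ^ (2*n+1) = (\<Prod>l\<in>{-int n..int n}. t/2)"
    by (simp add: nat_add_distrib nat_mult_distrib)
  also have "\<dots> \<le> (\<Prod>l\<in>{-int n..int n}. (t - real d * of_int l))"
  proof (intro prod_mono conjI ballI)
    fix l assume "l \<in> {-int n..int n}"
    hence "real d * of_int l \<le> real d * real n" by (intro mult_left_mono) auto
    thus "0 \<le> t/2" "t/2 \<le> t - real d * of_int l" using t t0 by auto
  qed
  finally show ?thesis unfolding Rn_def power_mult
    by (intro power_mono) (use t0 in auto)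
qed

(* The decay estimate |P_n(t)| <= C/t^2 for large t; it uses a >= 2b, i.e. deg R_n >= deg Q_n + 2. *)
lemma Pn_decay:
  assumes ab: "a \<ge> 2 * b" and b: "b > 0"
  obtains C where "C \<ge> 0" and "\<And>t. t \<ge> 2 * real ((d + 2*b) * n) + 1 \<Longrightarrow> \<bar>Pn d a b n t\<bar> \<le> C / t^2"
proof
  define K :: real where "K = fact (2*n) ^ (a - 2*b) * real d ^ (2*n*a)"
  define M where "M = (2*n+1)*a"
  have K: "K \<ge> 0" by (simp add: K_def)
  have M: "4*b*n + 2 \<le> M"
  proof -
    have "4*b*n \<le> 2*n*a" using mult_le_mono2[OF ab, of "2*n"] by (simp add: ac_simps)
    moreover have "2 \<le> a" using ab b by linarith
    moreover have "M = 2*n*a + a" by (simp add: M_def algebra_simps)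
    ultimately show ?thesis by linarith
  qed
  show "0 \<le> K * 2^M" using K by simp
  fix t :: real assume t: "t \<ge> 2 * real ((d + 2*b) * n) + 1"
  have "0 \<le> real ((d + 2*b) * n)" by simp
  hence t1: "t \<ge> 1" and tQ: "real ((d + 2*b) * n) \<le> t" using t by linarith+
  have "d * n \<le> (d + 2*b) * n" by (rule mult_le_mono1) simp
  hence "real (d * n) \<le> real ((d + 2*b) * n)" by (simp only: of_nat_le_iff)
  hence tR: "2 * real (d * n) \<le> t" using t by linarith
  have R: "(t/2)^M \<le> Rn d a n t" "0 < (t/2)^M"
    using Rn_lower_bound[OF tR] t1 by (simp_all add: M_def)
  have "\<bar>Pn d a b n t\<bar> = Qn d b n t / Rn d a n t * K"
    unfolding Pn_def K_def using Qn_bounds(1)[OF tQ] R by simp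
  also have "\<dots> \<le> t ^ (4*b*n) / (t/2)^M * K"
    using Qn_bounds[OF tQ] R K by (intro mult_right_mono frac_le) auto
  also have "\<dots> = K * 2^M * (t ^ (4*b*n) / t^M)"
    by (simp add: power_divide)
  also have "\<dots> \<le> K * 2^M * (1 / t^2)"
  proof (intro mult_left_mono)
    have "t ^ (4*b*n) * t^2 \<le> t^M"
      unfolding power_add[symmetric] using t1 M by (intro power_increasing) auto
    thus "t ^ (4*b*n) / t^M \<le> 1 / t^2" using t1 by (simp add: field_simps)
  qed (use K in simp)
  finally show "\<bar>Pn d a b n t\<bar> \<le> K * 2^M / t^2" by simp
qed

lemma frac_power_tendsto:
  fixes c :: real
  assumes "j \<ge> 1"
  shows "((\<lambda>t. t / (t - c)^j) \<longlongrightarrow> (if j = 1 then 1 else 0)) at_top"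
proof (cases "j = 1")
  case True
  then show ?thesis by simp real_asymp
next
  case False
  have "filterlim (\<lambda>t::real. t - c) at_top at_top" by real_asymp
  hence "filterlim (\<lambda>t. (t - c)^(j-1)) at_top at_top"
    using False assms by (intro filterlim_pow_at_top) auto
  hence "((\<lambda>t. inverse ((t - c)^(j-1))) \<longlongrightarrow> 0) at_top"
    by (rule tendsto_inverse_0_at_top)
  moreover have "((\<lambda>t. t / (t - c)) \<longlongrightarrow> 1) at_top" by real_asymp
  ultimately have "((\<lambda>t. t / (t - c) * inverse ((t - c)^(j-1))) \<longlongrightarrow> 1 * 0) at_top"
    by (intro tendsto_mult)
  moreover have "\<forall>\<^sub>F t in at_top. t / (t - c) * inverse ((t - c)^(j-1)) = t / (t - c)^j"
    using eventually_gt_at_top[of c]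
  proof eventually_elim
    case (elim t)
    have "(t - c)^j = (t - c) * (t - c)^(j-1)" using assms by (simp add: power_eq_if)
    thus ?case using elim by (simp add: field_simps)
  qed
  ultimately show ?thesis using False by (simp add: tendsto_cong)
qed

lemma decay_imp_times_tendsto_zero:
  fixes P :: "real \<Rightarrow> real"
  assumes decay: "\<And>t. t \<ge> T \<Longrightarrow> \<bar>P t\<bar> \<le> C / t^2"
  shows "((\<lambda>t. t * P t) \<longlongrightarrow> 0) at_top"
proof (rule Lim_null_comparison)
  show "\<forall>\<^sub>F t in at_top. norm (t * P t) \<le> C / t"
    using eventually_ge_at_top[of "max T 1"]
  proof eventually_elim
    case (elim t)
    hence t: "t \<ge> 1" "t \<ge> T" by auto
    have "norm (t * P t) = t * \<bar>P t\<bar>" using t(1) by (simp add: abs_mult)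
    also have "\<dots> \<le> t * (C / t^2)" using decay[OF t(2)] t(1) by (intro mult_left_mono) auto
    also have "\<dots> = C / t" using t(1) by (simp add: power2_eq_square)
    finally show ?case .
  qed
  show "((\<lambda>t. C / t) \<longlongrightarrow> 0) at_top" by real_asymp
qed

(* If t P(t) -> 0 at infinity, the residues of the partial fraction expansion of P add up to 0,
   since t P(t) tends to the sum of the simple-pole coefficients. *)
lemma residue_sum_zero:
  fixes P :: "real \<Rightarrow> real" and x :: "'i \<Rightarrow> real" and A :: "'i \<Rightarrow> nat \<Rightarrow> real"
  assumes N: "N \<ge> 1"
    and pfd: "\<forall>\<^sub>F t in at_top. P t = (\<Sum>j\<in>{1..N}. \<Sum>l\<in>L. A l j / (t - x l)^j)"
    and decay: "((\<lambda>t. t * P t) \<longlongrightarrow> 0) at_top"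
  shows "(\<Sum>l\<in>L. A l 1) = 0"
proof -
  define F where "F t = (\<Sum>j\<in>{1..N}. \<Sum>l\<in>L. A l j * (t / (t - x l)^j))" for t
  have "(F \<longlongrightarrow> (\<Sum>j\<in>{1..N}. \<Sum>l\<in>L. A l j * (if j = 1 then 1 else 0))) at_top"
    unfolding F_def by (intro tendsto_sum tendsto_mult tendsto_const frac_power_tendsto) auto
  also have "(\<Sum>j\<in>{1..N}. \<Sum>l\<in>L. A l j * (if j = 1 then 1 else 0))
      = (\<Sum>j\<in>{1..N}. if j = 1 then (\<Sum>l\<in>L. A l 1) else 0)"
    by (intro sum.cong) auto
  also have "\<dots> = (\<Sum>l\<in>L. A l 1)" using N by simp
  finally have lim_F: "(F \<longlongrightarrow> (\<Sum>l\<in>L. A l 1)) at_top" .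
  have "\<forall>\<^sub>F t in at_top. t * P t = F t"
    using pfd by eventually_elim (simp add: F_def sum_distrib_left algebra_simps)
  hence "((\<lambda>t. t * P t) \<longlongrightarrow> (\<Sum>l\<in>L. A l 1)) at_top"
    using lim_F by (simp add: tendsto_cong)
  from tendsto_unique[OF _ this decay] show ?thesis by simp
qed

lemma beyond_poles:
  assumes "real d * real n < t"
  shows "\<forall>l\<in>{-int n..int n}. t \<noteq> real d * of_int l"
proof
  fix l assume "l \<in> {-int n..int n}"
  hence "real d * of_int l \<le> real d * real n" by (intro mult_left_mono) auto
  thus "t \<noteq> real d * of_int l" using assms by linarith
qed

lemma residue_class_bij:
  fixes d m c :: nat
  assumes d: "d > 0" and m: "m \<in> {1..d}"
  shows "bij_betw (\<lambda>i. d*(c+i)+m) UNIV {k. d*c < k \<and> k mod d = m mod d}"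
proof (rule bij_betwI')
  fix x y :: nat
  show "(d*(c+x)+m = d*(c+y)+m) = (x = y)" using d by simp
next
  fix x :: nat
  have "(d*(c+x)+m) mod d = m mod d" by (simp add: mod_add_left_eq[symmetric])
  moreover have "d*c < d*(c+x)+m" using m d by (simp add: algebra_simps)
  ultimately show "d*(c+x)+m \<in> {k. d*c < k \<and> k mod d = m mod d}" by simp
next
  fix k assume k: "k \<in> {k. d*c < k \<and> k mod d = m mod d}"
  show "\<exists>x\<in>UNIV. k = d*(c+x)+m"
  proof (cases "m = d")
    case True
    with k have "k mod d = 0" by simp
    then obtain q where q: "k = d*q" by auto
    with k d have "c < q" by simp
    then show ?thesis using q True by (intro bexI[of _ "q - c - 1"]) (auto simp: algebra_simps)
  next
    case False
    with m have m_lt: "m mod d = m" "m < d" by auto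
    with k have "k mod d = m" by simp
    hence k_eq: "k = d*(k div d) + m" by (metis div_mult_mod_eq mult.commute)
    have "c \<le> k div d"
    proof (rule ccontr)
      assume "\<not> c \<le> k div d"
      hence "k div d + 1 \<le> c" by simp
      hence "d*(k div d + 1) \<le> d*c" by (intro mult_left_mono) auto
      with k_eq m_lt(2) k show False by (simp add: algebra_simps)
    qed
    then show ?thesis using k_eq by (intro bexI[of _ "k div d - c"]) auto
  qed
qed

(* Along a residue class, a convergent series of values of an O(1/t^2) function is absolutely
   convergent, hence an unconditional sum over the class. *)
lemma residue_class_has_sum:
  fixes P :: "real \<Rightarrow> real"
  assumes d: "d > 0" and m: "m \<in> {1..d}"
    and C: "C \<ge> 0" and decay: "\<And>t. t \<ge> T \<Longrightarrow> \<bar>P t\<bar> \<le> C / t^2"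
    and sums: "(\<lambda>i. P (real (d*(c+i)+m))) sums s"
  shows "((\<lambda>k. P (real k)) has_sum s) {k. d*c < k \<and> k mod d = m mod d}"
proof -
  have "summable (\<lambda>i. norm (P (real (d*(c+i)+m))))"
  proof (rule summable_comparison_test'[where N = "nat \<lceil>T\<rceil>"])
    have "summable (\<lambda>i. inverse (real i ^ 2))" by (rule inverse_power_summable) simp
    hence "summable (\<lambda>i. inverse (real (Suc i) ^ 2))" by (subst summable_Suc_iff)
    thus "summable (\<lambda>i. C * inverse (real (Suc i) ^ 2))" by (rule summable_mult)
    fix i assume i: "i \<ge> nat \<lceil>T\<rceil>"
    have "i \<le> d*i" using d by simp
    moreover have "d*(c+i)+m = d*c + d*i + m" by (simp add: algebra_simps)
    moreover have "1 \<le> m" using m by simp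
    ultimately have "Suc i \<le> d*(c+i)+m" by linarith
    hence node: "real (Suc i) \<le> real (d*(c+i)+m)" by (simp only: of_nat_le_iff)
    have "T \<le> real (d*(c+i)+m)" using i node by linarith
    hence "\<bar>P (real (d*(c+i)+m))\<bar> \<le> C / real (d*(c+i)+m)^2" by (rule decay)
    also have "\<dots> \<le> C * inverse (real (Suc i) ^ 2)"
      using C node by (simp add: divide_simps power_mono mult_left_mono)
    finally show "norm (norm (P (real (d*(c+i)+m)))) \<le> C * inverse (real (Suc i) ^ 2)" by simp
  qed
  from norm_summable_imp_has_sum[OF this sums]
  show ?thesis using has_sum_reindex_bij_betw[OF residue_class_bij[OF d m, of c], of "\<lambda>k. P (real k)"]
    by simp
qed

definition prog_term :: "nat \<Rightarrow> nat \<Rightarrow> nat \<Rightarrow> nat \<Rightarrow> real" where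
  "prog_term d m j q = 1 / real (d*q + m) ^ j"

lemma prog_term_summable:
  assumes "d > 0" "m \<ge> 1" "j \<ge> 2"
  shows "summable (prog_term d m j)"
proof (rule summable_comparison_test'[of "\<lambda>q. inverse (real q ^ 2)" 1])
  show "summable (\<lambda>q. inverse (real q ^ 2))" by (rule inverse_power_summable) simp
  fix q :: nat assume "q \<ge> 1"
  have "q \<le> d*q" using assms(1) by simp
  hence "q \<le> d*q+m" by (rule trans_le_add1)
  hence q_le: "real q \<le> real (d*q+m)" by (simp only: of_nat_le_iff)
  moreover have "real q ^ 2 \<le> real q ^ j" using \<open>q \<ge> 1\<close> assms by (intro power_increasing) auto
  ultimately have le: "real q ^ 2 \<le> real (d*q+m) ^ j"
    by (meson order_trans power_mono of_nat_0_le_iff)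
  have "norm (prog_term d m j q) = 1 / real (d*q+m) ^ j" by (simp add: prog_term_def)
  also have "\<dots> \<le> 1 / real q ^ 2"
    using le q_le \<open>q \<ge> 1\<close> by (intro divide_left_mono mult_pos_pos) auto
  finally show "norm (prog_term d m j q) \<le> inverse (real q ^ 2)" by (simp add: inverse_eq_divide)
qed

lemma prog_term_tendsto_zero:
  assumes "d > 0" "j \<ge> 1"
  shows "prog_term d m j \<longlonglongrightarrow> 0"
proof -
  have "filterlim (\<lambda>q. real (d*q+m)) at_top sequentially"
  proof (rule filterlim_at_top_mono[OF filterlim_real_sequentially always_eventually], rule allI)
    fix q :: nat
    have "q \<le> d*q" using assms(1) by simp
  hence "q \<le> d*q+m" by (rule trans_le_add1)
    thus "real q \<le> real (d*q+m)" by (simp only: of_nat_le_iff)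
  qed
  hence "filterlim (\<lambda>q. real (d*q+m) ^ j) at_top sequentially"
    using assms by (intro filterlim_pow_at_top) auto
  thus ?thesis unfolding prog_term_def
    by (intro tendsto_divide_0[OF tendsto_const] filterlim_at_top_imp_at_infinity)
qed

lemma zeta_m_has_sum:
  assumes d: "d > 0" and m: "m \<in> {1..d}" and j: "j \<ge> 2"
  shows "((\<lambda>k. 1 / real k ^ j) has_sum suminf (prog_term d m j)) {k. 1 \<le> k \<and> k mod d = m mod d}"
proof -
  have "((\<lambda>k. 1 / real k ^ j) has_sum suminf (prog_term d m j)) {k. d*0 < k \<and> k mod d = m mod d}"
  proof (rule residue_class_has_sum[OF d m, where P = "\<lambda>t. 1 / t ^ j" and C = 1 and T = 1])
    fix t :: real assume "t \<ge> 1"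
    moreover from this have "t^2 \<le> t^j" using j by (intro power_increasing) auto
    ultimately show "\<bar>1 / t ^ j\<bar> \<le> 1 / t^2" by (simp add: frac_le)
  next
    show "(\<lambda>i. 1 / real (d * (0 + i) + m) ^ j) sums suminf (prog_term d m j)"
      using summable_sums[OF prog_term_summable[OF d _ j]] m unfolding prog_term_def by simp
  qed simp
  moreover have "{k. d*0 < k \<and> k mod d = m mod d} = {k. 1 \<le> k \<and> k mod d = m mod d}" by auto
  ultimately show ?thesis by simp
qed

lemma zeta_m_eq_suminf:
  assumes "d > 0" and "m \<in> {1..d}" and "j \<ge> 2"
  shows "zeta_m d m j = suminf (prog_term d m j)"
  unfolding zeta_m_def using zeta_m_has_sum[OF assms] by (rule infsumI)

lemma shifted_difference_sums:
  fixes g :: "nat \<Rightarrow> 'a::real_normed_vector"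
  assumes "g \<longlonglongrightarrow> 0"
  shows "(\<lambda>i. g (i + p) - g i) sums (- (\<Sum>q<p. g q))"
proof (induction p)
  case 0
  then show ?case by simp
next
  case (Suc p)
  have "(\<lambda>i. g (Suc i + p) - g (i + p)) sums (0 - g (0 + p))"
    by (rule telescope_sums) (rule LIMSEQ_ignore_initial_segment[OF assms])
  from sums_add[OF this Suc.IH] show ?case by (simp add: algebra_simps)
qed

lemma Bcoef_eq:
  "Bcoef A d a n m = (\<Sum>j\<in>{1..a}. \<Sum>l\<in>{-int n..int n}. A l j * (\<Sum>q<nat (int n - l). prog_term d m j q))"
proof -
  have "(\<Sum>k\<in>{0..M - 1}. f k) = (\<Sum>q<nat M. f (int q))" for M :: int and f :: "int \<Rightarrow> real"
    by (rule sum.reindex_bij_witness[of _ int nat]) auto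
  thus ?thesis unfolding Bcoef_def prog_term_def by simp
qed

lemma partial_fraction_on_progression:
  fixes P :: "real \<Rightarrow> real" and A :: "int \<Rightarrow> nat \<Rightarrow> real"
  assumes m: "m \<ge> 1"
    and pfd: "\<And>t. (\<forall>l\<in>{-int n..int n}. t \<noteq> real d * of_int l) \<Longrightarrow>
        P t = (\<Sum>j\<in>{1..a}. \<Sum>l\<in>{-int n..int n}. A l j / (t - real d * of_int l) ^ j)"
  shows "P (real (d*(n+i)+m)) =
           (\<Sum>j\<in>{1..a}. \<Sum>l\<in>{-int n..int n}. A l j * prog_term d m j (i + nat (int n - l)))"
proof -
  have shift: "real (d*(n+i)+m) - real d * of_int l = real (d*(i + nat (int n - l)) + m)"
    if "l \<in> {-int n..int n}" for l
  proof -
    have "real (nat (int n - l)) = real n - of_int l" using that by simp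
    thus ?thesis by (simp only: of_nat_add of_nat_mult) (simp add: algebra_simps)
  qed
  have "d * n < d*(n+i)+m" using m by (simp add: algebra_simps)
  hence "real d * real n < real (d*(n+i)+m)" by (simp only: of_nat_mult[symmetric] of_nat_less_iff)
  hence "P (real (d*(n+i)+m)) = (\<Sum>j\<in>{1..a}. \<Sum>l\<in>{-int n..int n}.
                                    A l j / (real (d*(n+i)+m) - real d * of_int l)^j)"
    by (intro pfd beyond_poles)
  also have "\<dots> = (\<Sum>j\<in>{1..a}. \<Sum>l\<in>{-int n..int n}. A l j * prog_term d m j (i + nat (int n - l)))"
  proof (intro sum.cong refl)
    fix j l assume "l \<in> {-int n..int n}"
    show "A l j / (real (d*(n+i)+m) - real d * of_int l)^j = A l j * prog_term d m j (i + nat (int n - l))"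
      unfolding shift[OF \<open>l \<in> {-int n..int n}\<close>] prog_term_def by simp
  qed
  finally show ?thesis .
qed

lemma partial_fraction_progression_sums:
  fixes P :: "real \<Rightarrow> real" and A :: "int \<Rightarrow> nat \<Rightarrow> real"
  assumes d: "d > 0" and m: "m \<ge> 1" and a: "a \<ge> 1"
    and pfd: "\<And>t. (\<forall>l\<in>{-int n..int n}. t \<noteq> real d * of_int l) \<Longrightarrow>
        P t = (\<Sum>j\<in>{1..a}. \<Sum>l\<in>{-int n..int n}. A l j / (t - real d * of_int l) ^ j)"
    and residue: "Acoef A n 1 = 0"
  shows "(\<lambda>i. P (real (d*(n+i)+m))) sums
           ((\<Sum>j\<in>{2..a}. Acoef A n j * suminf (prog_term d m j)) - Bcoef A d a n m)"
proof -
  define L where "L = {-int n..int n}"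
  define p where "p l = nat (int n - l)" for l
  define g where "g = prog_term d m"
  define H where "H j r = (\<Sum>q<r. g j q)" for j r
  have split_first: "(\<Sum>j\<in>{1..a}. F j) = F 1 + (\<Sum>j\<in>{2..a}. F j)" for F :: "nat \<Rightarrow> real"
    using sum.atLeast_Suc_atMost[of 1 a F] a by (simp add: numeral_2_eq_2)
  \<comment> \<open>Since the simple-pole residues add up to zero, subtracting \<open>g 1 i\<close> from each of them
      turns the divergent harmonic-type part into convergent telescoping series.\<close>
  have term_eq: "P (real (d*(n+i)+m)) = (\<Sum>l\<in>L. A l 1 * (g 1 (i + p l) - g 1 i))
                   + (\<Sum>j\<in>{2..a}. \<Sum>l\<in>L. A l j * g j (i + p l))" for i
  proof -
    have "P (real (d*(n+i)+m)) = (\<Sum>j\<in>{1..a}. \<Sum>l\<in>L. A l j * g j (i + p l))"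
      unfolding L_def p_def g_def by (rule partial_fraction_on_progression[OF m pfd])
    also have "\<dots> = (\<Sum>l\<in>L. A l 1 * g 1 (i + p l)) + (\<Sum>j\<in>{2..a}. \<Sum>l\<in>L. A l j * g j (i + p l))"
      by (rule split_first)
    also have "(\<Sum>l\<in>L. A l 1 * g 1 (i + p l)) = (\<Sum>l\<in>L. A l 1 * (g 1 (i + p l) - g 1 i))"
      using residue by (simp add: Acoef_def L_def right_diff_distrib sum_subtractf flip: sum_distrib_right)
    finally show ?thesis .
  qed
  have sums_terms: "(\<lambda>i. (\<Sum>l\<in>L. A l 1 * (g 1 (i + p l) - g 1 i))
                        + (\<Sum>j\<in>{2..a}. \<Sum>l\<in>L. A l j * g j (i + p l)))
      sums ((\<Sum>l\<in>L. A l 1 * - H 1 (p l)) + (\<Sum>j\<in>{2..a}. \<Sum>l\<in>L. A l j * (suminf (g j) - H j (p l))))"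
  proof (intro sums_add sums_sum sums_mult)
    fix l
    show "(\<lambda>i. g 1 (i + p l) - g 1 i) sums - H 1 (p l)"
      unfolding H_def g_def by (rule shifted_difference_sums[OF prog_term_tendsto_zero[OF d]]) simp
  next
    fix j l assume "j \<in> {2..a}"
    hence "summable (g j)" unfolding g_def using prog_term_summable[OF d m] by simp
    thus "(\<lambda>i. g j (i + p l)) sums (suminf (g j) - H j (p l))"
      unfolding H_def by (intro sums_split_initial_segment summable_sums)
  qed
  have "Bcoef A d a n m = (\<Sum>l\<in>L. A l 1 * H 1 (p l)) + (\<Sum>j\<in>{2..a}. \<Sum>l\<in>L. A l j * H j (p l))"
    unfolding Bcoef_eq split_first by (simp add: L_def H_def p_def g_def)
  hence limit_value: "(\<Sum>l\<in>L. A l 1 * - H 1 (p l)) + (\<Sum>j\<in>{2..a}. \<Sum>l\<in>L. A l j * (suminf (g j) - H j (p l)))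
      = (\<Sum>j\<in>{2..a}. Acoef A n j * suminf (prog_term d m j)) - Bcoef A d a n m"
    by (simp add: Acoef_def L_def g_def right_diff_distrib sum_subtractf sum_distrib_right sum_negf)
  have "(\<lambda>i. P (real (d*(n+i)+m))) = (\<lambda>i. (\<Sum>l\<in>L. A l 1 * (g 1 (i + p l) - g 1 i))
                        + (\<Sum>j\<in>{2..a}. \<Sum>l\<in>L. A l j * g j (i + p l)))"
    by (rule ext) (rule term_eq)
  with sums_terms show ?thesis unfolding limit_value by simp
qed

lemma Pn_residue_class_has_sum:
  fixes d a b n m :: nat and A :: "int \<Rightarrow> nat \<Rightarrow> real"
  assumes d: "d > 0" and a: "a > 0" and b: "b > 0" and ab: "a \<ge> 2 * b"
    and pfd: "\<And>t. (\<forall>l\<in>{-int n..int n}. t \<noteq> real d * of_int l) \<Longrightarrow>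
        Pn d a b n t = (\<Sum>j\<in>{1..a}. \<Sum>l\<in>{-int n..int n}. A l j / (t - real d * of_int l) ^ j)"
    and m: "m \<in> {1..d}"
  shows "((\<lambda>k. Pn d a b n (real k)) has_sum
           ((\<Sum>j\<in>{j. 2 \<le> j \<and> j \<le> a \<and> j mod 2 = a mod 2}. Acoef A n j * zeta_m d m j)
             - Bcoef A d a n m)) {k. d * n < k \<and> k mod d = m mod d}"
proof -
  obtain C where C: "C \<ge> 0" "\<And>t. t \<ge> 2 * real ((d + 2*b) * n) + 1 \<Longrightarrow> \<bar>Pn d a b n t\<bar> \<le> C / t^2"
    using Pn_decay[OF ab b] by blast
  have residue: "Acoef A n 1 = 0" unfolding Acoef_def
  proof (rule residue_sum_zero[where P = "Pn d a b n" and x = "\<lambda>l. real d * of_int l" and N = a])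
    show "\<forall>\<^sub>F t in at_top. Pn d a b n t =
        (\<Sum>j\<in>{1..a}. \<Sum>l\<in>{-int n..int n}. A l j / (t - real d * of_int l) ^ j)"
      using eventually_gt_at_top[of "real d * real n"] by eventually_elim (intro pfd beyond_poles)
  qed (use a decay_imp_times_tendsto_zero[OF C(2)] in auto)
  have odd_terms_vanish: "(\<Sum>j\<in>{2..a}. Acoef A n j * suminf (prog_term d m j))
      = (\<Sum>j\<in>{j. 2 \<le> j \<and> j \<le> a \<and> j mod 2 = a mod 2}. Acoef A n j * zeta_m d m j)"
  proof (rule sum.mono_neutral_cong_right)
    show "\<forall>j\<in>{2..a} - {j. 2 \<le> j \<and> j \<le> a \<and> j mod 2 = a mod 2}. Acoef A n j * suminf (prog_term d m j) = 0"
      using coeff_sum_zero_by_parity[OF d pfd Pn_parity] by auto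
    show "\<And>j. j \<in> {j. 2 \<le> j \<and> j \<le> a \<and> j mod 2 = a mod 2} \<Longrightarrow>
        Acoef A n j * suminf (prog_term d m j) = Acoef A n j * zeta_m d m j"
      using zeta_m_eq_suminf[OF d m] by simp
  qed auto
  have "(\<lambda>i. Pn d a b n (real (d*(n+i)+m))) sums
          ((\<Sum>j\<in>{2..a}. Acoef A n j * suminf (prog_term d m j)) - Bcoef A d a n m)"
    using m a by (intro partial_fraction_progression_sums[OF d _ _ pfd residue]) auto
  from residue_class_has_sum[OF d m C(1) C(2) this] show ?thesis unfolding odd_terms_vanish .
qed

lemma has_sum_finite_disjoint_Union:
  fixes f :: "'a \<Rightarrow> 'b::topological_comm_monoid_add"
  assumes "finite I" and "disjoint_family_on S I" and "\<And>i. i \<in> I \<Longrightarrow> (f has_sum v i) (S i)"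
  shows "(f has_sum sum v I) (\<Union>i\<in>I. S i)"
  using assms
proof (induction I rule: finite_induct)
  case empty
  then show ?case by simp
next
  case (insert i I)
  have disj: "S i \<inter> (\<Union>i\<in>I. S i) = {}" and disj_I: "disjoint_family_on S I"
    using insert.prems(1) by (simp_all add: disjoint_family_on_insert[OF insert.hyps(2)])
  have sum_I: "(f has_sum sum v I) (\<Union>i\<in>I. S i)"
    by (rule insert.IH[OF disj_I], rule insert.prems(2)) simp
  have sum_i: "(f has_sum v i) (S i)" by (rule insert.prems(2)) simp
  from has_sum_Un_disjoint[OF sum_i sum_I disj]
  show ?case using insert.hyps by simp
qed

lemma periodic_on_residue_class:
  fixes c :: "nat \<Rightarrow> 'a"
  assumes per: "\<forall>k\<ge>1. c (k + d) = c k" and d: "d > 0" and m: "m \<in> {1..d}"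
    and k: "1 \<le> k" "k mod d = m mod d"
  shows "c k = c m"
proof -
  have "k \<in> range (\<lambda>i. d*(0+i)+m)"
    using bij_betw_imp_surj_on[OF residue_class_bij[OF d m, of 0]] k by simp
  then obtain q where q: "k = d*q + m" by auto
  have "c (d*q + m) = c m" for q
  proof (induction q)
    case (Suc q)
    have "c (d * Suc q + m) = c ((d*q + m) + d)" by (simp add: algebra_simps)
    also have "\<dots> = c (d*q + m)" using per m by simp
    finally show ?case using Suc by simp
  qed simp
  thus ?thesis using q by simp
qed

lemma Lser_residue_class_decomposition:
  fixes c :: "nat \<Rightarrow> real"
  assumes per: "\<forall>k\<ge>1. c (k + d) = c k" and d: "d > 0" and j: "j \<ge> 2"
  shows "Lser c j = (\<Sum>m\<in>{1..d}. c m * zeta_m d m j)"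
proof -
  define K where "K m = {k::nat. 1 \<le> k \<and> k mod d = m mod d}" for m
  have class_sum: "((\<lambda>k. c k / real k ^ j) has_sum c m * zeta_m d m j) (K m)" if m: "m \<in> {1..d}" for m
  proof -
    have "((\<lambda>k. 1 / real k ^ j) has_sum zeta_m d m j) (K m)"
      unfolding K_def zeta_m_eq_suminf[OF d m j] by (rule zeta_m_has_sum[OF d m j])
    hence scaled: "((\<lambda>k. c m * (1 / real k ^ j)) has_sum c m * zeta_m d m j) (K m)"
      by (rule has_sum_cmult_right)
    have "c k / real k ^ j = c m * (1 / real k ^ j)" if "k \<in> K m" for k
      using periodic_on_residue_class[OF per d m] that by (simp add: K_def)
    thus ?thesis by (rule has_sum_cong[THEN iffD2, OF _ scaled])
  qed
  have disjoint: "disjoint_family_on K {1..d}"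
    unfolding disjoint_family_on_def
  proof (intro ballI impI)
    fix m m' assume "m \<in> {1..d}" "m' \<in> {1..d}" "m \<noteq> m'"
    moreover have "r mod d = (if r = d then 0 else r)" if "r \<in> {1..d}" for r
      using that by auto
    ultimately have "m mod d \<noteq> m' mod d" by auto
    thus "K m \<inter> K m' = {}" by (auto simp: K_def)
  qed
  have cover: "(\<Union>m\<in>{1..d}. K m) = {1..}"
  proof (intro equalityI subsetI)
    fix k :: nat assume k: "k \<in> {1..}"
    show "k \<in> (\<Union>m\<in>{1..d}. K m)"
    proof (cases "k mod d = 0")
      case True
      thus ?thesis using k d by (intro UN_I[of d]) (auto simp: K_def)
    next
      case False
      thus ?thesis using k d by (intro UN_I[of "k mod d"]) (auto simp: K_def)
    qed
  qed (auto simp: K_def)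
  have "((\<lambda>k. c k / real k ^ j) has_sum (\<Sum>m\<in>{1..d}. c m * zeta_m d m j)) (\<Union>m\<in>{1..d}. K m)"
    by (rule has_sum_finite_disjoint_Union[OF _ disjoint class_sum]) simp_all
  thus ?thesis unfolding cover Lser_def by (rule infsumI)
qed

theorem proposition2p2:
  fixes d a b n :: nat and A :: "int \<Rightarrow> nat \<Rightarrow> real"
  assumes "d > 0" and "a > 0" and "b > 0" and "a \<ge> 2 * b" and "n > 0"
    and pfd: "\<And>t::real. (\<forall>l\<in>{-int n..int n}. t \<noteq> real d * of_int l) \<Longrightarrow>
        Pn d a b n t = (\<Sum>j\<in>{1..a}. \<Sum>l\<in>{-int n..int n}. A l j / (t - real d * of_int l) ^ j)"
  shows "(\<forall>m\<in>{1..d}.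
            ((\<lambda>k::nat. Pn d a b n (real k)) has_sum
               ((\<Sum>j\<in>{j. 2 \<le> j \<and> j \<le> a \<and> j mod 2 = a mod 2}. Acoef A n j * zeta_m d m j)
                 - Bcoef A d a n m))
            {k. d * n < k \<and> k mod d = m mod d})
       \<and> (\<forall>c::nat \<Rightarrow> real. (\<forall>k\<ge>1. c (k + d) = c k) \<longrightarrow>
            (\<Sum>m\<in>{1..d}. c m * (\<Sum>\<^sub>\<infinity>k\<in>{k. d * n < k \<and> k mod d = m mod d}. Pn d a b n (real k)))
            = (\<Sum>j\<in>{j. 2 \<le> j \<and> j \<le> a \<and> j mod 2 = a mod 2}. Acoef A n j * Lser c j)
              - (\<Sum>m\<in>{1..d}. Bcoef A d a n m * c m))"
proof -
  define J where "J = {j. 2 \<le> j \<and> j \<le> a \<and> j mod 2 = a mod 2}"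
  define I where "I m = (\<Sum>\<^sub>\<infinity>k\<in>{k. d * n < k \<and> k mod d = m mod d}. Pn d a b n (real k))" for m
  have classes: "((\<lambda>k. Pn d a b n (real k)) has_sum
      ((\<Sum>j\<in>J. Acoef A n j * zeta_m d m j) - Bcoef A d a n m)) {k. d * n < k \<and> k mod d = m mod d}"
    if "m \<in> {1..d}" for m
    unfolding J_def using Pn_residue_class_has_sum[OF assms(1-4) pfd that] .
  have "(\<Sum>m\<in>{1..d}. c m * I m) = (\<Sum>j\<in>J. Acoef A n j * Lser c j) - (\<Sum>m\<in>{1..d}. Bcoef A d a n m * c m)"
    if periodic: "\<forall>k\<ge>1. c (k + d) = c k" for c :: "nat \<Rightarrow> real"
  proof -
    have "(\<Sum>m\<in>{1..d}. c m * I m)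
        = (\<Sum>m\<in>{1..d}. c m * ((\<Sum>j\<in>J. Acoef A n j * zeta_m d m j) - Bcoef A d a n m))"
      unfolding I_def using classes by (intro sum.cong refl) (simp add: infsumI)
    also have "\<dots> = (\<Sum>j\<in>J. Acoef A n j * (\<Sum>m\<in>{1..d}. c m * zeta_m d m j))
                   - (\<Sum>m\<in>{1..d}. Bcoef A d a n m * c m)"
      by (simp add: right_diff_distrib sum_subtractf sum_distrib_left sum.swap[of _ J] mult_ac)
    also have "\<dots> = (\<Sum>j\<in>J. Acoef A n j * Lser c j) - (\<Sum>m\<in>{1..d}. Bcoef A d a n m * c m)"
      using Lser_residue_class_decomposition[OF periodic \<open>d > 0\<close>] by (simp add: J_def)
    finally show ?thesis .
  qed
  with classes show ?thesis unfolding J_def I_def by blast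
qed

end
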